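(* Let $\mathcal M=(h,M)$ be a polymatroid, $a\in M$, and $\alpha_1,\alpha_2\ge0$ real numbers with $\alpha_1+\alpha_2=h(a)$. Then there is a polymatroid $\mathcal M'=(h',\{a_1,a_2\}\cup(M\setminus\{a\}))$ (with $a_1,a_2$ new elements) such that $h'(a_i)=\alpha_i$ for $i=1,2$, and $\mathcal M$ is the factor of $\mathcal M'$ obtained by collapsing $a_1$ and $a_2$ to $a$ (i.e. $h'(A)=h(A)$ and $h'(a_1a_2A)=h(aA)$ for $A\subseteq M\setminus\{a\}$). Moreover, $\mathcal M$ is almost entropic if and only if $\mathcal M'$ is almost entropic.
   Context: A polymatroid $(h,M)$ consists of a finite set $M$ and a function $h$ on subsets of $M$ with $h(\emptyset)=0$ that is non-negative, monotone and submodular. It is almost entropic if, as a vector in $\mathbb R^{2^{|M|}-1}$, it lies in the closure of the entropic polymatroids (those of the form $A\mapsto\mathbf H(\xi_A)$ for jointly distributed discrete random variables). Juxtaposition denotes union, e.g. $a_1a_2A=\{a_1,a_2\}\cup A$. Given an equivalence relation $\cong$ on the ground set with quotient map $\phi$, the factor is the polymatroid $A\mapsto h(\phi^{-1}(A))$ on the set of classes. *)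

theory Defs
  imports "HOL-Probability.Probability"
begin

definition polymatroid :: "'a set \<Rightarrow> ('a set \<Rightarrow> real) \<Rightarrow> bool" where
  "polymatroid M h \<longleftrightarrow> finite M \<and> h {} = 0 \<and>
     (\<forall>A. A \<subseteq> M \<longrightarrow> 0 \<le> h A) \<and>
     (\<forall>A B. A \<subseteq> B \<and> B \<subseteq> M \<longrightarrow> h A \<le> h B) \<and>
     (\<forall>A B. A \<subseteq> M \<and> B \<subseteq> M \<longrightarrow> h (A \<union> B) + h (A \<inter> B) \<le> h A + h B)"

definition entropy_pmf :: "'b pmf \<Rightarrow> real" where
  "entropy_pmf q = - (\<Sum>x\<in>set_pmf q. pmf q x * log 2 (pmf q x))"

text \<open>Entropic: there are jointly distributed discrete (finite-valued) random
  variables \<xi>_i, i \<in> M (values labelled by naturals), given by their joint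
  distribution p, such that h A is the entropy of \<xi>_A for every A \<subseteq> M.\<close>
definition entropic :: "'a set \<Rightarrow> ('a set \<Rightarrow> real) \<Rightarrow> bool" where
  "entropic M h \<longleftrightarrow> (\<exists>p :: ('a \<Rightarrow> nat) pmf. finite (set_pmf p) \<and>
     (\<forall>A. A \<subseteq> M \<longrightarrow> h A = entropy_pmf (map_pmf (\<lambda>f. restrict f A) p)))"

definition almost_entropic :: "'a set \<Rightarrow> ('a set \<Rightarrow> real) \<Rightarrow> bool" where
  "almost_entropic M h \<longleftrightarrow> (\<forall>\<epsilon>>0. \<exists>g. entropic M g \<and>
     (\<forall>A. A \<subseteq> M \<longrightarrow> \<bar>h A - g A\<bar> < \<epsilon>))"

end

theory Submission imports Defs "HOL-Real_Asymp.Real_Asymp" begin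

text \<open>Let \<open>h\<^sub>1 B = h ((B - {a\<^sub>1, a\<^sub>2}) \<union> (if a\<^sub>1 \<in> B then {a} else {}))\<close> and let \<open>h\<^sub>2\<close> be
  defined symmetrically: \<open>h\<^sub>1\<close> is the polymatroid in which \<open>a\<^sub>1\<close> is a copy of \<open>a\<close> and \<open>a\<^sub>2\<close> is a
  loop. Both have \<open>h\<close> as factor, hence so does \<open>h' = t h\<^sub>1 + (1 - t) h\<^sub>2\<close>, and \<open>t h(a) = \<alpha>\<^sub>1\<close>
  gives the prescribed values on \<open>a\<^sub>1, a\<^sub>2\<close>. If \<open>h\<close> is entropic, so are \<open>h\<^sub>1, h\<^sub>2\<close> (copy the
  variable \<open>\<xi>\<^sub>a\<close>); conversely a factor of an entropic vector is entropic (merge \<open>\<xi>\<^sub>a\<^sub>1, \<xi>\<^sub>a\<^sub>2\<close>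
  into one variable). Since the closure of the entropic vectors is convex, both properties pass
  to almost entropic vectors.\<close>

lemma entropy_pmf_eq_sum:
  assumes "finite S" "set_pmf p \<subseteq> S"
  shows "entropy_pmf p = - (\<Sum>x\<in>S. pmf p x * log 2 (pmf p x))"
  unfolding entropy_pmf_def
  by (subst sum.mono_neutral_left[OF assms(1,2)]) (auto simp: set_pmf_iff)

lemma entropy_pmf_map_inj:
  assumes "inj_on f (set_pmf p)"
  shows "entropy_pmf (map_pmf f p) = entropy_pmf p"
  unfolding entropy_pmf_def set_map_pmf
  using assms by (simp add: sum.reindex pmf_map_inj)

lemma entropy_pmf_return: "entropy_pmf (return_pmf x) = 0"
  unfolding entropy_pmf_def by simp

lemma entropy_pmf_pair:
  assumes "finite (set_pmf p)" "finite (set_pmf q)"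
  shows "entropy_pmf (pair_pmf p q) = entropy_pmf p + entropy_pmf q"
proof -
  let ?P = "set_pmf p" and ?Q = "set_pmf q"
  have sum1: "(\<Sum>x\<in>?P. pmf p x) = 1" "(\<Sum>y\<in>?Q. pmf q y) = 1"
    using assms by (auto intro: sum_pmf_eq_1)
  have "(\<Sum>z\<in>set_pmf (pair_pmf p q). pmf (pair_pmf p q) z * log 2 (pmf (pair_pmf p q) z))
      = (\<Sum>x\<in>?P. \<Sum>y\<in>?Q. pmf p x * pmf q y * log 2 (pmf p x * pmf q y))"
    by (simp add: sum.cartesian_product pmf_pair split_beta flip: pmf_pair)
  also have "\<dots> = (\<Sum>x\<in>?P. \<Sum>y\<in>?Q. pmf q y * (pmf p x * log 2 (pmf p x))
                                    + pmf p x * (pmf q y * log 2 (pmf q y)))"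
  proof (intro sum.cong refl)
    fix x y assume "x \<in> ?P" "y \<in> ?Q"
    then have "pmf p x > 0" "pmf q y > 0" by (auto simp: set_pmf_eq')
    then show "pmf p x * pmf q y * log 2 (pmf p x * pmf q y)
        = pmf q y * (pmf p x * log 2 (pmf p x)) + pmf p x * (pmf q y * log 2 (pmf q y))"
      by (simp add: log_mult algebra_simps)
  qed
  also have "\<dots> = (\<Sum>x\<in>?P. pmf p x * log 2 (pmf p x)) + (\<Sum>y\<in>?Q. pmf q y * log 2 (pmf q y))"
    by (simp add: sum.distrib sum1 sum.swap[of _ ?P ?Q]
        flip: sum_distrib_left sum_distrib_right)
  finally show ?thesis unfolding entropy_pmf_def by simp
qed

definition binary_entropy :: "real \<Rightarrow> real" where
  "binary_entropy d = - d * log 2 d - (1 - d) * log 2 (1 - d)"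

lemma binary_entropy_inverse_LIMSEQ: "(\<lambda>n::nat. binary_entropy (1 / real n)) \<longlonglongrightarrow> 0"
  unfolding binary_entropy_def by real_asymp

lemma entropy_pmf_reveal:
  fixes q :: "'b pmf"
  assumes fin: "finite (set_pmf q)" and d: "0 < d" "d < 1"
  defines "D \<equiv> map_pmf (\<lambda>(b, r). if b then Some r else None) (pair_pmf (bernoulli_pmf d) q)"
  shows "entropy_pmf D = d * entropy_pmf q + binary_entropy d"
proof -
  let ?Q = "set_pmf q"
  define S where "S = insert None (Some ` ?Q)"
  have finS: "finite S" using fin by (simp add: S_def)
  have supp: "set_pmf D \<subseteq> S" unfolding D_def S_def by auto
  have pmf_Some: "pmf D (Some r) = d * pmf q r" for r
  proof -
    have "(\<lambda>(b, r). if b then Some r else None) -` {Some r} = {(True, r)}"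
      by (auto split: if_splits)
    then show ?thesis
      unfolding D_def pmf_map using d by (simp add: measure_pmf_single pmf_pair)
  qed
  have sum1: "(\<Sum>r\<in>?Q. pmf q r) = 1" using fin by (auto intro: sum_pmf_eq_1)
  have "pmf D None + (\<Sum>r\<in>?Q. pmf D (Some r)) = 1"
    using sum_pmf_eq_1[OF finS supp] fin by (simp add: S_def sum.reindex)
  then have pmf_None: "pmf D None = 1 - d"
    by (simp add: pmf_Some sum1 flip: sum_distrib_left)
  have "entropy_pmf D = - ((1 - d) * log 2 (1 - d) + (\<Sum>r\<in>?Q. d * pmf q r * log 2 (d * pmf q r)))"
    using fin by (simp add: entropy_pmf_eq_sum[OF finS supp] S_def sum.reindex pmf_Some pmf_None)
  also have "(\<Sum>r\<in>?Q. d * pmf q r * log 2 (d * pmf q r))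
      = (\<Sum>r\<in>?Q. d * log 2 d * pmf q r + d * (pmf q r * log 2 (pmf q r)))"
  proof (intro sum.cong refl)
    fix r assume "r \<in> ?Q"
    then have "pmf q r > 0" by (auto simp: set_pmf_eq')
    then show "d * pmf q r * log 2 (d * pmf q r) = d * log 2 d * pmf q r + d * (pmf q r * log 2 (pmf q r))"
      using d by (simp add: log_mult algebra_simps)
  qed
  also have "\<dots> = d * log 2 d + d * (\<Sum>r\<in>?Q. pmf q r * log 2 (pmf q r))"
    by (simp add: sum.distrib sum1 flip: sum_distrib_left)
  finally show ?thesis unfolding entropy_pmf_def binary_entropy_def by (simp add: algebra_simps)
qed

lemma entropic_cong:
  "entropic N g \<Longrightarrow> (\<And>A. A \<subseteq> N \<Longrightarrow> g A = g' A) \<Longrightarrow> entropic N g'"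
  unfolding entropic_def by metis

lemma entropic_empty: "entropic N g \<Longrightarrow> g {} = 0"
  unfolding entropic_def by (auto simp: restrict_def entropy_pmf_return)

lemma entropic_zero: "entropic N (\<lambda>A. 0)"
  unfolding entropic_def
  by (rule exI[of _ "return_pmf (\<lambda>_. 0)"]) (simp add: entropy_pmf_return)

lemma entropic_add:
  assumes "entropic N g1" "entropic N g2"
  shows "entropic N (\<lambda>A. g1 A + g2 A)"
proof -
  obtain p1 :: "('a \<Rightarrow> nat) pmf" where p1: "finite (set_pmf p1)"
    "\<And>A. A \<subseteq> N \<Longrightarrow> g1 A = entropy_pmf (map_pmf (\<lambda>f. restrict f A) p1)"
    using assms(1) unfolding entropic_def by blast
  obtain p2 :: "('a \<Rightarrow> nat) pmf" where p2: "finite (set_pmf p2)"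
    "\<And>A. A \<subseteq> N \<Longrightarrow> g2 A = entropy_pmf (map_pmf (\<lambda>f. restrict f A) p2)"
    using assms(2) unfolding entropic_def by blast
  define p where "p = map_pmf (\<lambda>(f1, f2) x. prod_encode (f1 x, f2 x)) (pair_pmf p1 p2)"
  have "g1 A + g2 A = entropy_pmf (map_pmf (\<lambda>f. restrict f A) p)" if "A \<subseteq> N" for A
  proof -
    define K where "K = (\<lambda>(r1, r2). restrict (\<lambda>x. prod_encode (r1 x, r2 x)) A)"
    let ?q = "pair_pmf (map_pmf (\<lambda>f. restrict f A) p1) (map_pmf (\<lambda>f. restrict f A) p2)"
    have "map_pmf (\<lambda>f. restrict f A) p = map_pmf K ?q"
      unfolding p_def K_def map_pair[symmetric] map_pmf_comp
      by (intro map_pmf_cong refl) (auto simp: restrict_def fun_eq_iff)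
    moreover have "inj_on K (set_pmf ?q)"
    proof (rule inj_onI, clarsimp)
      fix f1 f2 f1' f2'
      assume eq: "K (restrict f1 A, restrict f2 A) = K (restrict f1' A, restrict f2' A)"
      have "f1 x = f1' x \<and> f2 x = f2' x" if "x \<in> A" for x
        using fun_cong[OF eq, of x] that by (simp add: K_def prod_encode_eq)
      then show "restrict f1 A = restrict f1' A \<and> restrict f2 A = restrict f2' A"
        by (auto simp: fun_eq_iff)
    qed
    ultimately show ?thesis
      using p1 p2 that by (simp add: entropy_pmf_map_inj entropy_pmf_pair)
  qed
  moreover have "finite (set_pmf p)" using p1(1) p2(1) by (simp add: p_def)
  ultimately show ?thesis unfolding entropic_def by blast
qed

lemma entropic_of_nat_mult:
  assumes "entropic N g"
  shows "entropic N (\<lambda>A. real k * g A)"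
proof (induction k)
  case 0
  then show ?case using entropic_zero by simp
next
  case (Suc k)
  from entropic_add[OF Suc assms] show ?case
    by (rule entropic_cong) (simp add: algebra_simps)
qed

lemma inj_on_reveal:
  assumes "A \<noteq> {}"
  shows "inj_on (case_option (restrict (\<lambda>_. 0::nat) A) (\<lambda>r. restrict (\<lambda>x. r x + 1) A))
           (insert None (Some ` extensional A))"
proof (rule inj_onI)
  fix z z' assume z: "z \<in> insert None (Some ` extensional A)" "z' \<in> insert None (Some ` extensional A)"
    and eq: "case_option (restrict (\<lambda>_. 0::nat) A) (\<lambda>r. restrict (\<lambda>x. r x + 1) A) z
           = case_option (restrict (\<lambda>_. 0::nat) A) (\<lambda>r. restrict (\<lambda>x. r x + 1) A) z'"
  obtain x0 where x0: "x0 \<in> A" using assms by blast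
  from z show "z = z'"
  proof (elim insertE imageE)
    fix r r' assume r: "z = Some r" "r \<in> extensional A" "z' = Some r'" "r' \<in> extensional A"
    have "r x = r' x" if "x \<in> A" for x
      using fun_cong[OF eq, of x] r that by simp
    with r show "z = z'" by (simp add: extensionalityI)
  qed (use fun_cong[OF eq, of x0] x0 in auto)
qed

text \<open>With probability \<open>d\<close> the random vector is revealed, shifted by one so that it differs
  from the constant \<open>0\<close> shown otherwise.\<close>

lemma entropic_reveal:
  assumes "entropic N g" "0 < d" "d < 1"
  shows "entropic N (\<lambda>A. if A = {} then 0 else d * g A + binary_entropy d)"
proof -
  obtain p :: "('a \<Rightarrow> nat) pmf" where p: "finite (set_pmf p)"
    "\<And>A. A \<subseteq> N \<Longrightarrow> g A = entropy_pmf (map_pmf (\<lambda>f. restrict f A) p)"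
    using assms(1) unfolding entropic_def by blast
  define p' where "p' = map_pmf (\<lambda>(b, f). if b then (\<lambda>x. f x + 1) else (\<lambda>_. 0::nat))
                                 (pair_pmf (bernoulli_pmf d) p)"
  have "d * g A + binary_entropy d = entropy_pmf (map_pmf (\<lambda>f. restrict f A) p')"
    if A: "A \<subseteq> N" "A \<noteq> {}" for A
  proof -
    define q where "q = map_pmf (\<lambda>f. restrict f A) p"
    define D where "D = map_pmf (\<lambda>(b, r). if b then Some r else None) (pair_pmf (bernoulli_pmf d) q)"
    define E where "E = case_option (restrict (\<lambda>_. 0::nat) A) (\<lambda>r. restrict (\<lambda>x. r x + 1) A)"
    have "map_pmf (\<lambda>f. restrict f A) p' = map_pmf E D"
      unfolding p'_def D_def q_def E_def pair_map_pmf2 map_pmf_comp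
      by (intro map_pmf_cong refl) (auto simp: restrict_def fun_eq_iff)
    moreover have "inj_on E (set_pmf D)"
      unfolding E_def
      by (rule inj_on_subset[OF inj_on_reveal[OF A(2)]]) (auto simp: D_def q_def)
    ultimately have "entropy_pmf (map_pmf (\<lambda>f. restrict f A) p') = entropy_pmf D"
      by (simp add: entropy_pmf_map_inj)
    also have "\<dots> = d * entropy_pmf q + binary_entropy d"
      unfolding D_def using assms p(1) by (intro entropy_pmf_reveal) (auto simp: q_def)
    finally show ?thesis using p(2)[OF A(1)] by (simp add: q_def)
  qed
  moreover have "finite (set_pmf p')" using p(1) by (simp add: p'_def)
  ultimately show ?thesis
    unfolding entropic_def
    by (intro exI[of _ p']) (auto simp: restrict_def entropy_pmf_return)
qed

text \<open>The hypotheses say that the coordinates \<open>B\<close> of \<open>T \<xi>\<close> are an injective function of the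
  coordinates \<open>\<sigma> B\<close> of \<open>\<xi>\<close>.\<close>

lemma entropic_relabel:
  fixes T :: "('a \<Rightarrow> nat) \<Rightarrow> ('b \<Rightarrow> nat)"
  assumes "entropic M g"
    and "\<And>B. B \<subseteq> N \<Longrightarrow> \<sigma> B \<subseteq> M"
    and "\<And>B f. B \<subseteq> N \<Longrightarrow> restrict (T f) B = restrict (T (restrict f (\<sigma> B))) B"
    and "\<And>B. B \<subseteq> N \<Longrightarrow> inj_on (\<lambda>r. restrict (T r) B) (extensional (\<sigma> B))"
  shows "entropic N (\<lambda>B. g (\<sigma> B))"
proof -
  obtain p :: "('a \<Rightarrow> nat) pmf" where p: "finite (set_pmf p)"
    "\<And>A. A \<subseteq> M \<Longrightarrow> g A = entropy_pmf (map_pmf (\<lambda>f. restrict f A) p)"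
    using assms(1) unfolding entropic_def by blast
  have "g (\<sigma> B) = entropy_pmf (map_pmf (\<lambda>f. restrict f B) (map_pmf T p))" if B: "B \<subseteq> N" for B
  proof -
    let ?K = "\<lambda>r. restrict (T r) B"
    have "map_pmf (\<lambda>f. restrict f B) (map_pmf T p) = map_pmf ?K (map_pmf (\<lambda>f. restrict f (\<sigma> B)) p)"
      by (simp add: map_pmf_comp assms(3)[OF B, symmetric])
    moreover have "inj_on ?K (set_pmf (map_pmf (\<lambda>f. restrict f (\<sigma> B)) p))"
      by (rule inj_on_subset[OF assms(4)[OF B]]) auto
    ultimately show ?thesis using p(2) assms(2)[OF B] by (simp add: entropy_pmf_map_inj)
  qed
  moreover have "finite (set_pmf (map_pmf T p))" using p(1) by simp
  ultimately show ?thesis unfolding entropic_def by blast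
qed

definition rename_drop :: "'a \<Rightarrow> 'a \<Rightarrow> 'a \<Rightarrow> 'a set \<Rightarrow> 'a set" where
  "rename_drop a1 a2 a B = (B - {a1, a2}) \<union> (if a1 \<in> B then {a} else {})"

definition collapse_preimage :: "'a \<Rightarrow> 'a \<Rightarrow> 'a \<Rightarrow> 'a set \<Rightarrow> 'a set" where
  "collapse_preimage a a1 a2 B = (if a \<in> B then {a1, a2} \<union> (B - {a}) else B)"

lemma rename_drop_collapse_preimage:
  assumes "a1 \<notin> B" "a2 \<notin> B"
  shows "rename_drop a1 a2 a (collapse_preimage a a1 a2 B) = B"
  using assms by (auto simp: rename_drop_def collapse_preimage_def)

lemma collapse_preimage_notin [simp]: "a \<notin> B \<Longrightarrow> collapse_preimage a a1 a2 B = B"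
  by (simp add: collapse_preimage_def)

lemma collapse_preimage_insert [simp]:
  "a \<notin> B \<Longrightarrow> collapse_preimage a a1 a2 (insert a B) = {a1, a2} \<union> B"
  by (simp add: collapse_preimage_def)

lemma collapse_preimage_commute: "collapse_preimage a a2 a1 = collapse_preimage a a1 a2"
  by (auto simp: collapse_preimage_def fun_eq_iff)

lemma entropic_rename_drop:
  assumes "entropic M g" "a \<in> M" "a1 \<notin> M" "a2 \<notin> M" "a1 \<noteq> a2"
  shows "entropic ({a1, a2} \<union> (M - {a})) (\<lambda>B. g (rename_drop a1 a2 a B))"
proof (rule entropic_relabel[OF assms(1), where T = "\<lambda>f. f(a1 := f a, a2 := 0)"])
  fix B assume B: "B \<subseteq> {a1, a2} \<union> (M - {a})"
  then show "rename_drop a1 a2 a B \<subseteq> M"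
    using assms(2) by (auto simp: rename_drop_def)
  show "restrict (f(a1 := f a, a2 := 0)) B
      = restrict ((restrict f (rename_drop a1 a2 a B))(a1 := restrict f (rename_drop a1 a2 a B) a, a2 := 0)) B"
    for f using assms(5) by (auto simp: rename_drop_def restrict_def fun_eq_iff)
  show "inj_on (\<lambda>r. restrict (r(a1 := r a, a2 := 0)) B) (extensional (rename_drop a1 a2 a B))"
  proof (rule inj_onI, rule extensionalityI, assumption+)
    fix r r' y
    assume eq: "restrict (r(a1 := r a, a2 := 0)) B = restrict (r'(a1 := r' a, a2 := 0)) B"
      and y: "y \<in> rename_drop a1 a2 a B"
    show "r y = r' y"
    proof (cases "y = a")
      case True
      then have "a1 \<in> B" using y B assms(2-4) by (auto simp: rename_drop_def split: if_splits)
      then show ?thesis using fun_cong[OF eq, of a1] True assms(5) by simp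
    next
      case False
      then have "y \<in> B" "y \<noteq> a1" "y \<noteq> a2" using y by (auto simp: rename_drop_def split: if_splits)
      then show ?thesis using fun_cong[OF eq, of y] by simp
    qed
  qed
qed

lemma entropic_collapse_preimage:
  assumes "entropic ({a1, a2} \<union> (M - {a})) g" "a \<in> M" "a1 \<notin> M" "a2 \<notin> M" "a1 \<noteq> a2"
  shows "entropic M (\<lambda>B. g (collapse_preimage a a1 a2 B))"
proof (rule entropic_relabel[OF assms(1), where T = "\<lambda>f. f(a := prod_encode (f a1, f a2))"])
  fix B assume B: "B \<subseteq> M"
  then show "collapse_preimage a a1 a2 B \<subseteq> {a1, a2} \<union> (M - {a})"
    by (auto simp: collapse_preimage_def)
  show "restrict (f(a := prod_encode (f a1, f a2))) B
      = restrict ((restrict f (collapse_preimage a a1 a2 B))(a := prod_encode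
          (restrict f (collapse_preimage a a1 a2 B) a1, restrict f (collapse_preimage a a1 a2 B) a2))) B"
    for f by (auto simp: collapse_preimage_def restrict_def fun_eq_iff)
  show "inj_on (\<lambda>r. restrict (r(a := prod_encode (r a1, r a2))) B)
          (extensional (collapse_preimage a a1 a2 B))"
  proof (rule inj_onI, rule extensionalityI, assumption+)
    fix r r' y
    assume eq: "restrict (r(a := prod_encode (r a1, r a2))) B = restrict (r'(a := prod_encode (r' a1, r' a2))) B"
      and y: "y \<in> collapse_preimage a a1 a2 B"
    show "r y = r' y"
    proof (cases "y = a1 \<or> y = a2")
      case True
      then have "a \<in> B" using y B assms(3,4) by (auto simp: collapse_preimage_def split: if_splits)
      then show ?thesis using fun_cong[OF eq, of a] True by (auto simp: prod_encode_eq)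
    next
      case False
      then have "y \<in> B" "y \<noteq> a" using y by (auto simp: collapse_preimage_def split: if_splits)
      then show ?thesis using fun_cong[OF eq, of y] by simp
    qed
  qed
qed

lemma entropic_imp_almost_entropic: "entropic N g \<Longrightarrow> almost_entropic N g"
  unfolding almost_entropic_def by auto

lemma almost_entropic_cong:
  "almost_entropic N h \<Longrightarrow> (\<And>A. A \<subseteq> N \<Longrightarrow> h A = h' A) \<Longrightarrow> almost_entropic N h'"
  unfolding almost_entropic_def by metis

lemma almost_entropic_comp:
  assumes "almost_entropic M h"
    and "\<And>B. B \<subseteq> N \<Longrightarrow> \<sigma> B \<subseteq> M"
    and "\<And>g. entropic M g \<Longrightarrow> entropic N (\<lambda>B. g (\<sigma> B))"
  shows "almost_entropic N (\<lambda>B. h (\<sigma> B))"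
  using assms unfolding almost_entropic_def by meson

lemma almost_entropic_closed:
  assumes "finite N"
    and "eventually (\<lambda>n. almost_entropic N (G n)) sequentially"
    and "\<And>A. A \<subseteq> N \<Longrightarrow> (\<lambda>n. G n A) \<longlonglongrightarrow> h A"
  shows "almost_entropic N h"
  unfolding almost_entropic_def
proof (intro allI impI)
  fix e :: real assume e: "e > 0"
  have "\<forall>A\<in>Pow N. eventually (\<lambda>n. \<bar>G n A - h A\<bar> < e / 2) sequentially"
  proof
    fix A assume "A \<in> Pow N"
    then have "(\<lambda>n. G n A) \<longlonglongrightarrow> h A" using assms(3) by blast
    then show "eventually (\<lambda>n. \<bar>G n A - h A\<bar> < e / 2) sequentially"
      unfolding tendsto_iff dist_real_def using e half_gt_zero by blast
  qed
  then have "eventually (\<lambda>n. almost_entropic N (G n) \<and> (\<forall>A\<in>Pow N. \<bar>G n A - h A\<bar> < e / 2)) sequentially"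
    using assms(1,2) by (intro eventually_conj eventually_ball_finite) auto
  then obtain n where n: "almost_entropic N (G n)" "\<And>A. A \<subseteq> N \<Longrightarrow> \<bar>G n A - h A\<bar> < e / 2"
    unfolding eventually_sequentially by blast
  obtain g where g: "entropic N g" "\<And>A. A \<subseteq> N \<Longrightarrow> \<bar>G n A - g A\<bar> < e / 2"
    using n(1) e unfolding almost_entropic_def by (meson half_gt_zero)
  have "\<bar>h A - g A\<bar> < e" if "A \<subseteq> N" for A
    using n(2)[OF that] g(2)[OF that] by linarith
  with g(1) show "\<exists>g. entropic N g \<and> (\<forall>A. A \<subseteq> N \<longrightarrow> \<bar>h A - g A\<bar> < e)" by blast
qed

lemma almost_entropic_imp_LIMSEQ:
  assumes "almost_entropic N h"
  obtains G where "\<And>n. entropic N (G n)" "\<And>A. A \<subseteq> N \<Longrightarrow> (\<lambda>n. G n A) \<longlonglongrightarrow> h A"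
proof -
  have "\<forall>n::nat. \<exists>g. entropic N g \<and> (\<forall>A. A \<subseteq> N \<longrightarrow> \<bar>h A - g A\<bar> < 1 / real (Suc n))"
    using assms unfolding almost_entropic_def by simp
  then obtain G where G: "\<And>n. entropic N (G n)"
    "\<And>n A. A \<subseteq> N \<Longrightarrow> \<bar>h A - G n A\<bar> < 1 / real (Suc n)"
    by metis
  have "(\<lambda>n. G n A) \<longlonglongrightarrow> h A" if "A \<subseteq> N" for A
    using LIMSEQ_norm_0[of "\<lambda>n. G n A - h A"] G(2)[OF that]
    by (simp add: LIM_zero_iff abs_minus_commute)
  with G(1) show thesis using that by blast
qed

lemma nat_floor_mult_divide_LIMSEQ:
  assumes "0 \<le> t"
  shows "(\<lambda>n. real (nat \<lfloor>t * real n\<rfloor>) / real n) \<longlonglongrightarrow> t"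
proof (rule tendsto_sandwich)
  show "eventually (\<lambda>n. t - 1 / real n \<le> real (nat \<lfloor>t * real n\<rfloor>) / real n) sequentially"
    using eventually_gt_at_top[of 0]
  proof eventually_elim
    case (elim n)
    have "t * real n - 1 \<le> real (nat \<lfloor>t * real n\<rfloor>)" by linarith
    then have "(t * real n - 1) / real n \<le> real (nat \<lfloor>t * real n\<rfloor>) / real n"
      by (rule divide_right_mono) simp
    then show ?case using elim by (simp add: diff_divide_distrib)
  qed
  show "eventually (\<lambda>n. real (nat \<lfloor>t * real n\<rfloor>) / real n \<le> t) sequentially"
    using eventually_gt_at_top[of 0]
  proof eventually_elim
    case (elim n)
    have "real (nat \<lfloor>t * real n\<rfloor>) \<le> t * real n" using assms by (simp add: of_nat_nat)
    then have "real (nat \<lfloor>t * real n\<rfloor>) / real n \<le> t * real n / real n"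
      by (rule divide_right_mono) simp
    then show ?case using elim by simp
  qed
  show "(\<lambda>n. t - 1 / real n) \<longlonglongrightarrow> t" "(\<lambda>n. t) \<longlonglongrightarrow> t" by real_asymp+
qed

text \<open>The approximating entropic vectors are \<open>(K g\<^sub>1 + (n - K) g\<^sub>2)/n\<close> with \<open>K = \<lfloor>t n\<rfloor>\<close>,
  revealed with probability \<open>1/n\<close>; the price of the revealing, \<open>binary_entropy (1/n)\<close>,
  tends to \<open>0\<close>.\<close>

lemma almost_entropic_convex_entropic:
  assumes "finite N" "entropic N g1" "entropic N g2" "0 \<le> t" "t \<le> 1"
  shows "almost_entropic N (\<lambda>A. t * g1 A + (1 - t) * g2 A)"
proof -
  define K where "K n = nat \<lfloor>t * real n\<rfloor>" for n
  define G where "G n A = (if A = {} then 0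
      else real (K n) / real n * g1 A + (1 - real (K n) / real n) * g2 A + binary_entropy (1 / real n))"
    for n A
  show ?thesis
  proof (rule almost_entropic_closed[OF assms(1), of G])
    show "eventually (\<lambda>n. almost_entropic N (G n)) sequentially"
      using eventually_ge_at_top[of 2]
    proof eventually_elim
      case (elim n)
      have "K n \<le> n" using assms(5) mult_right_mono[of t 1 "real n"] by (simp add: K_def nat_le_iff floor_le_iff)
      then have "1 - real (K n) / real n = real (n - K n) / real n" using elim by (simp add: field_simps)
      then have "entropic N (\<lambda>A. if A = {} then 0
          else 1 / real n * (real (K n) * g1 A + real (n - K n) * g2 A) + binary_entropy (1 / real n))"
        using elim by (intro entropic_reveal entropic_add entropic_of_nat_mult assms) auto
      then show ?case
        by (rule entropic_imp_almost_entropic[OF entropic_cong])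
          (auto simp: G_def algebra_simps \<open>1 - real (K n) / real n = real (n - K n) / real n\<close>)
    qed
    fix A assume "A \<subseteq> N"
    show "(\<lambda>n. G n A) \<longlonglongrightarrow> t * g1 A + (1 - t) * g2 A"
    proof (cases "A = {}")
      case True
      then show ?thesis
        using entropic_empty[OF assms(2)] entropic_empty[OF assms(3)] by (simp add: G_def)
    next
      case False
      have "(\<lambda>n. real (K n) / real n * g1 A + (1 - real (K n) / real n) * g2 A
                  + binary_entropy (1 / real n)) \<longlonglongrightarrow> t * g1 A + (1 - t) * g2 A + 0"
        unfolding K_def
        by (intro tendsto_intros nat_floor_mult_divide_LIMSEQ binary_entropy_inverse_LIMSEQ assms)
      then show ?thesis using False by (simp add: G_def)
    qed
  qed
qed

lemma almost_entropic_convex: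
  assumes "finite N" "almost_entropic N f1" "almost_entropic N f2" "0 \<le> t" "t \<le> 1"
  shows "almost_entropic N (\<lambda>A. t * f1 A + (1 - t) * f2 A)"
proof -
  obtain G1 where G1: "\<And>n. entropic N (G1 n)" "\<And>A. A \<subseteq> N \<Longrightarrow> (\<lambda>n. G1 n A) \<longlonglongrightarrow> f1 A"
    using almost_entropic_imp_LIMSEQ[OF assms(2)] by blast
  obtain G2 where G2: "\<And>n. entropic N (G2 n)" "\<And>A. A \<subseteq> N \<Longrightarrow> (\<lambda>n. G2 n A) \<longlonglongrightarrow> f2 A"
    using almost_entropic_imp_LIMSEQ[OF assms(3)] by blast
  show ?thesis
  proof (rule almost_entropic_closed[OF assms(1), of "\<lambda>n A. t * G1 n A + (1 - t) * G2 n A"])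
    show "eventually (\<lambda>n. almost_entropic N (\<lambda>A. t * G1 n A + (1 - t) * G2 n A)) sequentially"
      using almost_entropic_convex_entropic[OF assms(1) G1(1) G2(1) assms(4,5)] by simp
    show "(\<lambda>n. t * G1 n A + (1 - t) * G2 n A) \<longlonglongrightarrow> t * f1 A + (1 - t) * f2 A" if "A \<subseteq> N" for A
      by (intro tendsto_intros G1(2) G2(2) that)
  qed
qed

lemma almost_entropic_rename_drop:
  assumes "almost_entropic M h" "a \<in> M" "a1 \<notin> M" "a2 \<notin> M" "a1 \<noteq> a2"
  shows "almost_entropic ({a1, a2} \<union> (M - {a})) (\<lambda>B. h (rename_drop a1 a2 a B))"
  using assms(2) by (intro almost_entropic_comp[OF assms(1)] entropic_rename_drop assms(2-5))
    (auto simp: rename_drop_def)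

lemma almost_entropic_collapse_preimage:
  assumes "almost_entropic ({a1, a2} \<union> (M - {a})) h" "a \<in> M" "a1 \<notin> M" "a2 \<notin> M" "a1 \<noteq> a2"
  shows "almost_entropic M (\<lambda>B. h (collapse_preimage a a1 a2 B))"
  by (intro almost_entropic_comp[OF assms(1)] entropic_collapse_preimage assms(2-5))
    (auto simp: collapse_preimage_def)

lemma polymatroid_comp:
  assumes "polymatroid M h" "finite N"
    and "\<And>B. B \<subseteq> N \<Longrightarrow> \<sigma> B \<subseteq> M" "\<sigma> {} = {}"
    and "\<And>B C. B \<subseteq> N \<Longrightarrow> C \<subseteq> N \<Longrightarrow> \<sigma> (B \<union> C) = \<sigma> B \<union> \<sigma> C"
  shows "polymatroid N (\<lambda>B. h (\<sigma> B))"
proof -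
  have h: "h {} = 0" "\<And>A. A \<subseteq> M \<Longrightarrow> 0 \<le> h A"
    "\<And>A B. A \<subseteq> B \<Longrightarrow> B \<subseteq> M \<Longrightarrow> h A \<le> h B"
    "\<And>A B. A \<subseteq> M \<Longrightarrow> B \<subseteq> M \<Longrightarrow> h (A \<union> B) + h (A \<inter> B) \<le> h A + h B"
    using assms(1) unfolding polymatroid_def by blast+
  have mono: "\<sigma> B \<subseteq> \<sigma> C" if "B \<subseteq> C" "C \<subseteq> N" for B C
    using assms(5)[of B C] that by (metis Un_absorb1 Un_upper1 order_trans)
  show ?thesis unfolding polymatroid_def
  proof (intro conjI allI impI)
    fix B C assume BC: "B \<subseteq> N \<and> C \<subseteq> N"
    have "h (\<sigma> (B \<inter> C)) \<le> h (\<sigma> B \<inter> \<sigma> C)"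
      using BC mono[of "B \<inter> C" B] mono[of "B \<inter> C" C] assms(3)[of B] by (intro h(3)) auto
    moreover have "h (\<sigma> B \<union> \<sigma> C) + h (\<sigma> B \<inter> \<sigma> C) \<le> h (\<sigma> B) + h (\<sigma> C)"
      using BC assms(3) by (intro h(4)) auto
    ultimately show "h (\<sigma> (B \<union> C)) + h (\<sigma> (B \<inter> C)) \<le> h (\<sigma> B) + h (\<sigma> C)"
      using assms(5) BC by simp
  qed (use assms h mono in \<open>auto\<close>)
qed

lemma polymatroid_rename_drop:
  assumes "polymatroid M h" "a \<in> M"
  shows "polymatroid ({a1, a2} \<union> (M - {a})) (\<lambda>B. h (rename_drop a1 a2 a B))"
proof (rule polymatroid_comp[OF assms(1)])
  show "finite ({a1, a2} \<union> (M - {a}))" using assms(1) by (simp add: polymatroid_def)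
qed (use assms(2) in \<open>auto simp: rename_drop_def\<close>)

lemma polymatroid_convex:
  assumes "polymatroid N f1" "polymatroid N f2" "0 \<le> t" "t \<le> 1"
  shows "polymatroid N (\<lambda>B. t * f1 B + (1 - t) * f2 B)"
proof -
  have f1: "finite N" "f1 {} = 0" "\<And>A. A \<subseteq> N \<Longrightarrow> 0 \<le> f1 A"
    "\<And>A B. A \<subseteq> B \<Longrightarrow> B \<subseteq> N \<Longrightarrow> f1 A \<le> f1 B"
    "\<And>A B. A \<subseteq> N \<Longrightarrow> B \<subseteq> N \<Longrightarrow> f1 (A \<union> B) + f1 (A \<inter> B) \<le> f1 A + f1 B"
    using assms(1) unfolding polymatroid_def by blast+
  have f2: "f2 {} = 0" "\<And>A. A \<subseteq> N \<Longrightarrow> 0 \<le> f2 A"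
    "\<And>A B. A \<subseteq> B \<Longrightarrow> B \<subseteq> N \<Longrightarrow> f2 A \<le> f2 B"
    "\<And>A B. A \<subseteq> N \<Longrightarrow> B \<subseteq> N \<Longrightarrow> f2 (A \<union> B) + f2 (A \<inter> B) \<le> f2 A + f2 B"
    using assms(2) unfolding polymatroid_def by blast+
  have t: "0 \<le> t" "0 \<le> 1 - t" using assms(3,4) by simp_all
  show ?thesis unfolding polymatroid_def
  proof (intro conjI allI impI)
    fix A B assume "A \<subseteq> B \<and> B \<subseteq> N"
    then show "t * f1 A + (1 - t) * f2 A \<le> t * f1 B + (1 - t) * f2 B"
      using f1(4)[of A B] f2(3)[of A B] t by (intro add_mono mult_left_mono) auto
  next
    fix A B assume AB: "A \<subseteq> N \<and> B \<subseteq> N"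
    have "t * (f1 (A \<union> B) + f1 (A \<inter> B)) \<le> t * (f1 A + f1 B)"
      using f1(5)[of A B] AB t by (intro mult_left_mono) auto
    moreover have "(1 - t) * (f2 (A \<union> B) + f2 (A \<inter> B)) \<le> (1 - t) * (f2 A + f2 B)"
      using f2(4)[of A B] AB t by (intro mult_left_mono) auto
    ultimately show "t * f1 (A \<union> B) + (1 - t) * f2 (A \<union> B) + (t * f1 (A \<inter> B) + (1 - t) * f2 (A \<inter> B))
        \<le> t * f1 A + (1 - t) * f2 A + (t * f1 B + (1 - t) * f2 B)"
      by (simp add: algebra_simps)
  qed (use f1 f2 t in auto)
qed

definition split_rank :: "real \<Rightarrow> 'a \<Rightarrow> 'a \<Rightarrow> 'a \<Rightarrow> ('a set \<Rightarrow> real) \<Rightarrow> 'a set \<Rightarrow> real" where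
  "split_rank t a a1 a2 h B = t * h (rename_drop a1 a2 a B) + (1 - t) * h (rename_drop a2 a1 a B)"

lemma split_rank_collapse_preimage:
  assumes "a1 \<notin> B" "a2 \<notin> B"
  shows "split_rank t a a1 a2 h (collapse_preimage a a1 a2 B) = h B"
proof -
  have "rename_drop a2 a1 a (collapse_preimage a a1 a2 B) = B"
    using rename_drop_collapse_preimage[of a2 B a1 a] assms by (simp add: collapse_preimage_commute)
  then show ?thesis
    using rename_drop_collapse_preimage[OF assms] by (simp add: split_rank_def algebra_simps)
qed

lemma split_rank_singletons:
  assumes "h {} = 0" "a1 \<noteq> a2"
  shows "split_rank t a a1 a2 h {a1} = t * h {a}" "split_rank t a a1 a2 h {a2} = (1 - t) * h {a}"
  using assms by (auto simp: split_rank_def rename_drop_def)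

lemma polymatroid_split_rank:
  assumes "polymatroid M h" "a \<in> M" "0 \<le> t" "t \<le> 1"
  shows "polymatroid ({a1, a2} \<union> (M - {a})) (split_rank t a a1 a2 h)"
proof -
  have swap: "{a1, a2} \<union> (M - {a}) = {a2, a1} \<union> (M - {a})" by blast
  have "polymatroid ({a1, a2} \<union> (M - {a})) (\<lambda>B. h (rename_drop a1 a2 a B))"
    by (rule polymatroid_rename_drop[OF assms(1,2)])
  moreover have "polymatroid ({a1, a2} \<union> (M - {a})) (\<lambda>B. h (rename_drop a2 a1 a B))"
    unfolding swap by (rule polymatroid_rename_drop[OF assms(1,2)])
  ultimately show ?thesis
    unfolding split_rank_def [abs_def] by (rule polymatroid_convex[OF _ _ assms(3,4)])
qed

lemma almost_entropic_split_rank_iff: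
  assumes "finite M" "a \<in> M" "a1 \<notin> M" "a2 \<notin> M" "a1 \<noteq> a2" "0 \<le> t" "t \<le> 1"
  shows "almost_entropic M h \<longleftrightarrow> almost_entropic ({a1, a2} \<union> (M - {a})) (split_rank t a a1 a2 h)"
proof
  assume ae: "almost_entropic M h"
  have swap: "{a1, a2} \<union> (M - {a}) = {a2, a1} \<union> (M - {a})" by blast
  have "finite ({a1, a2} \<union> (M - {a}))" using assms(1) by simp
  moreover have "almost_entropic ({a1, a2} \<union> (M - {a})) (\<lambda>B. h (rename_drop a1 a2 a B))"
    by (rule almost_entropic_rename_drop[OF ae assms(2-5)])
  moreover have "almost_entropic ({a1, a2} \<union> (M - {a})) (\<lambda>B. h (rename_drop a2 a1 a B))"
    unfolding swap by (rule almost_entropic_rename_drop[OF ae assms(2,4,3) assms(5)[symmetric]])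
  ultimately show "almost_entropic ({a1, a2} \<union> (M - {a})) (split_rank t a a1 a2 h)"
    unfolding split_rank_def [abs_def] by (rule almost_entropic_convex[OF _ _ _ assms(6,7)])
next
  assume "almost_entropic ({a1, a2} \<union> (M - {a})) (split_rank t a a1 a2 h)"
  from almost_entropic_collapse_preimage[OF this assms(2-5)] show "almost_entropic M h"
  proof (rule almost_entropic_cong)
    fix B assume "B \<subseteq> M"
    then show "split_rank t a a1 a2 h (collapse_preimage a a1 a2 B) = h B"
      using assms(3,4) by (intro split_rank_collapse_preimage) blast+
  qed
qed

theorem lemma2p10:
  fixes M :: "'a set" and h :: "'a set \<Rightarrow> real" and a a1 a2 :: 'a
    and \<alpha>1 \<alpha>2 :: real
  assumes "polymatroid M h" and "a \<in> M"
    and "\<alpha>1 \<ge> 0" and "\<alpha>2 \<ge> 0" and "\<alpha>1 + \<alpha>2 = h {a}"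
    and "a1 \<notin> M" and "a2 \<notin> M" and "a1 \<noteq> a2"
  shows "\<exists>h'. polymatroid ({a1, a2} \<union> (M - {a})) h' \<and>
           h' {a1} = \<alpha>1 \<and> h' {a2} = \<alpha>2 \<and>
           (\<forall>A. A \<subseteq> M - {a} \<longrightarrow> h' A = h A \<and> h' ({a1, a2} \<union> A) = h (insert a A)) \<and>
           (almost_entropic M h \<longleftrightarrow> almost_entropic ({a1, a2} \<union> (M - {a})) h')"
proof -
  define t where "t = \<alpha>1 / h {a}"
    \<comment> \<open>if \<open>h {a} = 0\<close> then \<open>\<alpha>1 = 0\<close>, and \<open>t = 0\<close> by the convention \<open>x / 0 = 0\<close>\<close>
  have t: "0 \<le> t" "t \<le> 1" "t * h {a} = \<alpha>1" using assms(3-5) by (auto simp: t_def divide_le_eq_1)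
  have "h {} = 0" "finite M" using assms(1) by (simp_all add: polymatroid_def)
  have factor: "split_rank t a a1 a2 h A = h A \<and> split_rank t a a1 a2 h ({a1, a2} \<union> A) = h (insert a A)"
    if "A \<subseteq> M - {a}" for A
  proof -
    have "a \<notin> A" "a1 \<notin> insert a A" "a2 \<notin> insert a A"
      using that assms(2,6,7) by auto
    then show ?thesis
      using split_rank_collapse_preimage[of a1 A a2 t a h] split_rank_collapse_preimage[of a1 "insert a A" a2 t a h]
      by simp
  qed
  show ?thesis
  proof (intro exI conjI)
    show "polymatroid ({a1, a2} \<union> (M - {a})) (split_rank t a a1 a2 h)"
      by (rule polymatroid_split_rank[OF assms(1,2) t(1,2)])
    show "split_rank t a a1 a2 h {a1} = \<alpha>1" "split_rank t a a1 a2 h {a2} = \<alpha>2"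
      using split_rank_singletons[where h = h and t = t and a = a, OF \<open>h {} = 0\<close> assms(8)] assms(5) t(3)
      by (simp_all add: algebra_simps)
    show "\<forall>A. A \<subseteq> M - {a} \<longrightarrow> split_rank t a a1 a2 h A = h A
        \<and> split_rank t a a1 a2 h ({a1, a2} \<union> A) = h (insert a A)"
      using factor by blast
    show "almost_entropic M h \<longleftrightarrow> almost_entropic ({a1, a2} \<union> (M - {a})) (split_rank t a a1 a2 h)"
      by (rule almost_entropic_split_rank_iff[OF \<open>finite M\<close> assms(2,6-8) t(1,2)])
  qed
qed

end
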